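(* Let $n\ge2$, let $P=(p_{ij})$ be an $n\times n$ checkerboard copula and $\mathbf{p}=\mathrm{vec}(P)$. Then $$1-\mathrm{tr}(\Xi P\Xi P^\top)=1-\mathbf{p}^\top W\mathbf{p}=\mathbf{p}^\top(V\otimes V)\mathbf{p}.$$
   Context: An $n\times n$ checkerboard copula is a real $n\times n$ matrix with nonnegative entries whose row and column sums all equal $\frac1n$. $\Xi=(\xi_{ij})$ with $\xi_{ij}=1$ if $i=j$, $2$ if $i>j$, $0$ if $i<j$. $J_n$ is the $n\times n$ all-ones matrix and $V=\Xi-J_n$. $\mathrm{vec}(P)=(p_{11},p_{12},\dots,p_{1n},p_{21},\dots,p_{nn})^\top$ (row-major order). $W=\frac12(\Xi\otimes\Xi^\top+\Xi^\top\otimes\Xi)$, where $\otimes$ is the Kronecker product. *)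

theory Defs
  imports Complex_Main
begin

text \<open>Matrices are represented as functions nat => nat => real, with indices 0-based and
  restricted by explicit bounds (entries outside the index range are irrelevant).
  Index i (0-based) corresponds to index i+1 of the paper, so the order relation on
  indices is preserved.\<close>

type_synonym rmat = "nat \<Rightarrow> nat \<Rightarrow> real"
type_synonym rvec = "nat \<Rightarrow> real"

definition checkerboard_copula :: "nat \<Rightarrow> rmat \<Rightarrow> bool" where
  "checkerboard_copula n P \<longleftrightarrow>
     (\<forall>i<n. \<forall>j<n. 0 \<le> P i j) \<and>
     (\<forall>i<n. (\<Sum>j<n. P i j) = 1 / real n) \<and>
     (\<forall>j<n. (\<Sum>i<n. P i j) = 1 / real n)"

definition Xi :: rmat where
  "Xi i j = (if i = j then 1 else if i > j then 2 else 0)"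

definition Jall :: rmat where
  "Jall i j = 1"

definition Vmat :: rmat where
  "Vmat i j = Xi i j - Jall i j"

definition mmult :: "nat \<Rightarrow> rmat \<Rightarrow> rmat \<Rightarrow> rmat" where
  "mmult n A B i j = (\<Sum>k<n. A i k * B k j)"

definition mtrans :: "rmat \<Rightarrow> rmat" where
  "mtrans A i j = A j i"

definition mtrace :: "nat \<Rightarrow> rmat \<Rightarrow> real" where
  "mtrace n A = (\<Sum>i<n. A i i)"

definition vec_rm :: "nat \<Rightarrow> rmat \<Rightarrow> rvec" where
  "vec_rm n P I = P (I div n) (I mod n)"

definition kron :: "nat \<Rightarrow> rmat \<Rightarrow> rmat \<Rightarrow> rmat" where
  "kron m A B I J = A (I div m) (J div m) * B (I mod m) (J mod m)"

definition Wmat :: "nat \<Rightarrow> rmat" where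
  "Wmat n I J = (1/2) * (kron n Xi (mtrans Xi) I J + kron n (mtrans Xi) Xi I J)"

definition qform :: "nat \<Rightarrow> rvec \<Rightarrow> rmat \<Rightarrow> real" where
  "qform N x M = (\<Sum>I<N. \<Sum>J<N. x I * M I J * x J)"

end

(* Row-major vectorisation turns tr(A P B P^T) into p^T (A (x) B^T) p, so the trace is the
   quadratic form of Xi (x) Xi^T; the second Kronecker product in W is its transpose and has
   the same quadratic form. From Xi^T = 2J - Xi and V = Xi - J one gets
   Xi (x) Xi^T + V (x) V = Xi (x) J - J (x) Xi + J (x) J.  Because every row and column sum of a
   checkerboard copula is 1/n, the forms of Xi (x) J and J (x) Xi both equal (sum of Xi)/n^2
   and cancel, while J (x) J contributes (sum of p)^2 = 1. *)

theory Submission imports Defs begin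

lemma sum_lessThan_mult_nat:
  fixes g :: "nat \<Rightarrow> 'a::comm_monoid_add"
  shows "(\<Sum>I<m * n. g I) = (\<Sum>i<m. \<Sum>k<n. g (i * n + k))"
proof -
  have "(\<Sum>I\<in>{i * n..<i * n + n}. g I) = (\<Sum>k<n. g (i * n + k))" for i
    using sum.shift_bounds_nat_ivl[of g 0 "i * n" n]
    by (simp add: lessThan_atLeast0 add.commute)
  then show ?thesis
    using sum.nat_group[of g n m] by simp
qed

lemma kron_index:
  assumes "k < n" "l < n"
  shows "kron n A B (i * n + k) (j * n + l) = A i j * B k l"
  using assms unfolding kron_def by simp

lemma mtrans_mtrans [simp]: "mtrans (mtrans A) = A"
  unfolding mtrans_def by (intro ext) (rule refl)

lemma kron_mtrans: "kron n (mtrans A) (mtrans B) = mtrans (kron n A B)"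
  unfolding kron_def mtrans_def by (intro ext) simp

lemma qform_mtrans: "qform N x (mtrans M) = qform N x M"
  unfolding qform_def mtrans_def
  by (subst sum.swap) (simp add: mult.commute mult.left_commute)

lemma qform_add: "qform N x (\<lambda>I J. M I J + M' I J) = qform N x M + qform N x M'"
  unfolding qform_def by (simp add: algebra_simps sum.distrib)

lemma qform_diff: "qform N x (\<lambda>I J. M I J - M' I J) = qform N x M - qform N x M'"
  unfolding qform_def by (simp add: algebra_simps sum_subtractf)

lemma qform_cmult: "qform N x (\<lambda>I J. c * M I J) = c * qform N x M"
  unfolding qform_def by (simp add: algebra_simps sum_distrib_left)

lemma qform_vec_rm_kron:
  "qform (n * n) (vec_rm n P) (kron n A B) =
     (\<Sum>i<n. \<Sum>k<n. \<Sum>j<n. \<Sum>l<n. P i k * A i j * B k l * P j l)"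
  unfolding qform_def vec_rm_def
  by (simp add: sum_lessThan_mult_nat sum_distrib_left sum_distrib_right kron_index mult.assoc)

lemma mtrace_mmult_eq_qform_kron:
  "mtrace n (mmult n (mmult n (mmult n A P) B) (mtrans P)) =
     qform (n * n) (vec_rm n P) (kron n A (mtrans B))"
proof -
  have "mtrace n (mmult n (mmult n (mmult n A P) B) (mtrans P)) =
      (\<Sum>i<n. \<Sum>k<n. \<Sum>l<n. \<Sum>j<n. P i k * A i j * B l k * P j l)"
    unfolding mtrace_def mmult_def mtrans_def
    by (simp add: sum_distrib_left sum_distrib_right algebra_simps)
  also have "\<dots> = (\<Sum>i<n. \<Sum>k<n. \<Sum>j<n. \<Sum>l<n. P i k * A i j * B l k * P j l)"
    by (intro sum.cong refl sum.swap)
  finally show ?thesis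
    by (simp add: qform_vec_rm_kron mtrans_def)
qed

lemma qform_vec_rm_mtrans_kron:
  "qform (n * n) (vec_rm n (mtrans P)) (kron n B A) = qform (n * n) (vec_rm n P) (kron n A B)"
proof -
  have "qform (n * n) (vec_rm n (mtrans P)) (kron n B A) =
      (\<Sum>i<n. \<Sum>k<n. \<Sum>j<n. \<Sum>l<n. P k i * B i j * A k l * P l j)"
    by (simp add: qform_vec_rm_kron mtrans_def)
  also have "\<dots> = (\<Sum>k<n. \<Sum>i<n. \<Sum>j<n. \<Sum>l<n. P k i * B i j * A k l * P l j)"
    by (rule sum.swap)
  also have "\<dots> = (\<Sum>k<n. \<Sum>i<n. \<Sum>l<n. \<Sum>j<n. P k i * B i j * A k l * P l j)"
    by (intro sum.cong refl sum.swap)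
  also have "\<dots> = qform (n * n) (vec_rm n P) (kron n A B)"
    unfolding qform_vec_rm_kron by (intro sum.cong refl) (simp add: mult_ac)
  finally show ?thesis .
qed

lemma qform_vec_rm_kron_Jall_right:
  "qform (n * n) (vec_rm n P) (kron n A Jall) =
     (\<Sum>i<n. \<Sum>j<n. A i j * (\<Sum>k<n. P i k) * (\<Sum>l<n. P j l))"
proof -
  have "qform (n * n) (vec_rm n P) (kron n A Jall) =
      (\<Sum>i<n. \<Sum>k<n. \<Sum>j<n. \<Sum>l<n. A i j * (P i k * P j l))"
    unfolding qform_vec_rm_kron Jall_def by (intro sum.cong refl) (simp add: mult_ac)
  also have "\<dots> = (\<Sum>i<n. \<Sum>j<n. \<Sum>k<n. \<Sum>l<n. A i j * (P i k * P j l))"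
    by (intro sum.cong refl sum.swap)
  also have "\<dots> = (\<Sum>i<n. \<Sum>j<n. A i j * ((\<Sum>k<n. P i k) * (\<Sum>l<n. P j l)))"
    by (simp only: sum_product) (simp only: sum_distrib_left)
  finally show ?thesis
    by (simp only: mult.assoc)
qed

lemma qform_vec_rm_kron_Jall_left:
  "qform (n * n) (vec_rm n P) (kron n Jall B) =
     (\<Sum>k<n. \<Sum>l<n. B k l * (\<Sum>i<n. P i k) * (\<Sum>j<n. P j l))"
  using qform_vec_rm_kron_Jall_right[of n "mtrans P" B]
  by (simp add: qform_vec_rm_mtrans_kron mtrans_def)

lemma mtrans_Xi: "mtrans Xi i j = 2 - Xi i j"
  unfolding mtrans_def Xi_def by auto

lemma kron_Xi_mtrans_Xi_add_kron_Vmat: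
  "kron n Xi (mtrans Xi) I J + kron n Vmat Vmat I J =
     kron n Xi Jall I J - kron n Jall Xi I J + kron n Jall Jall I J"
  unfolding kron_def mtrans_Xi Vmat_def Jall_def by (simp add: algebra_simps)

lemma checkerboard_copula_qform_kron_Jall_right:
  assumes "checkerboard_copula n P"
  shows "qform (n * n) (vec_rm n P) (kron n A Jall) = (\<Sum>i<n. \<Sum>j<n. A i j) / real n ^ 2"
  using assms unfolding checkerboard_copula_def qform_vec_rm_kron_Jall_right
  by (simp add: sum_divide_distrib power2_eq_square)

lemma checkerboard_copula_qform_kron_Jall_left:
  assumes "checkerboard_copula n P"
  shows "qform (n * n) (vec_rm n P) (kron n Jall B) = (\<Sum>i<n. \<Sum>j<n. B i j) / real n ^ 2"
  using assms unfolding checkerboard_copula_def qform_vec_rm_kron_Jall_left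
  by (simp add: sum_divide_distrib power2_eq_square)

theorem lemma1:
  fixes n :: nat and P :: "nat \<Rightarrow> nat \<Rightarrow> real"
  assumes "n \<ge> 2" and "checkerboard_copula n P"
  shows "1 - mtrace n (mmult n (mmult n (mmult n Xi P) Xi) (mtrans P))
           = 1 - qform (n*n) (vec_rm n P) (Wmat n)
       \<and> 1 - qform (n*n) (vec_rm n P) (Wmat n)
           = qform (n*n) (vec_rm n P) (kron n Vmat Vmat)"
proof -
  let ?q = "qform (n * n) (vec_rm n P)"
  have trace: "mtrace n (mmult n (mmult n (mmult n Xi P) Xi) (mtrans P)) = ?q (kron n Xi (mtrans Xi))"
    by (rule mtrace_mmult_eq_qform_kron)
  have "kron n (mtrans Xi) Xi = mtrans (kron n Xi (mtrans Xi))"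
    by (metis kron_mtrans mtrans_mtrans)
  then have qform_Wmat: "?q (Wmat n) = ?q (kron n Xi (mtrans Xi))"
    unfolding Wmat_def by (simp only: qform_cmult qform_add qform_mtrans) simp
  have "?q (kron n Xi (mtrans Xi)) + ?q (kron n Vmat Vmat) =
      ?q (\<lambda>I J. kron n Xi Jall I J - kron n Jall Xi I J + kron n Jall Jall I J)"
    by (simp only: qform_add[symmetric] kron_Xi_mtrans_Xi_add_kron_Vmat)
  also have "\<dots> = ?q (kron n Xi Jall) - ?q (kron n Jall Xi) + ?q (kron n Jall Jall)"
    by (simp only: qform_add qform_diff)
  also have "\<dots> = 1"
    using assms by (simp add: checkerboard_copula_qform_kron_Jall_right
        checkerboard_copula_qform_kron_Jall_left Jall_def power2_eq_square)
  finally show ?thesis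
    using trace qform_Wmat by simp
qed

end
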